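(* Let $q>n$ and let $\Theta:C\setminus\{o\}\to(0,\infty)$ be continuous and positively homogeneous of degree $-q$. Let $\mathbb{A}$ be a $C$-asymptotic set and $z\in C\setminus\{o\}$. Then there exists a constant $M>0$ depending only on $C,\Theta,\mathbb{A},z$ such that $T_\Theta(\mathbb{A},tz)\le M\,t^{n-q-1}$ for all sufficiently large $t$. Consequently $T_\Theta(\mathbb{A},tz)=o(t^{n-q})$ as $t\to+\infty$.
   Context: $C\subset\mathbb{R}^n$ ($n\ge2$) is a pointed closed convex cone with nonempty interior. A $C$-asymptotic set is an unbounded closed convex set $\mathbb{A}\subset C$ with nonempty interior and $o\notin\mathbb{A}$ such that $\lim_{x\in\partial\mathbb{A},|x|\to\infty}d(x,\partial C)=0$. $T_\Theta(\mathbb{A},z)=\int_{(z+C)\setminus(z+\mathbb{A})}\Theta\,d\mathcal{H}^n$. *)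

theory Defs
  imports "HOL-Analysis.Analysis" "HOL-Library.Landau_Symbols"
begin

definition pointed_cone :: "'a::euclidean_space set \<Rightarrow> bool" where
  "pointed_cone C \<longleftrightarrow> cone C \<and> convex C \<and> closed C \<and> interior C \<noteq> {} \<and>
     C \<inter> uminus ` C = {0}"

definition C_asymptotic :: "'a::euclidean_space set \<Rightarrow> 'a set \<Rightarrow> bool" where
  "C_asymptotic C A \<longleftrightarrow> A \<subseteq> C \<and> closed A \<and> convex A \<and> \<not> bounded A \<and>
     interior A \<noteq> {} \<and> 0 \<notin> A \<and>
     (\<forall>\<epsilon>>0. \<exists>R. \<forall>x\<in>frontier A. norm x > R \<longrightarrow> infdist x (frontier C) < \<epsilon>)"

text \<open>T_Theta(A,z) = integral of Theta over (z+C) \ (z+A) w.r.t. n-dim Hausdorff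
  (= Lebesgue) measure; as a nonnegative (possibly infinite) integral.\<close>
definition T_Theta :: "'a::euclidean_space set \<Rightarrow> ('a \<Rightarrow> real) \<Rightarrow> 'a set \<Rightarrow> 'a \<Rightarrow> ennreal" where
  "T_Theta C \<Theta> A z = (\<integral>\<^sup>+ x. indicator (((+) z ` C) - ((+) z ` A)) x * ennreal (\<Theta> x) \<partial>lebesgue)"

end

theory Submission
  imports Defs
begin

text \<open>The asymptotic set contains a translate \<open>a + C\<close> of the cone: far out, the boundary of
  \<open>\<bbbA>\<close> comes arbitrarily close to \<open>\<partial>C\<close>, whereas a point where a ray \<open>a + u c\<close> (\<open>c \<in> C\<close>)
  leaves \<open>\<bbbA>\<close> keeps a fixed ball of \<open>\<bbbA>\<close>, translated into \<open>C\<close>, around it. Hence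
  \<open>(tz + C) \ (tz + \<bbbA>) \<subseteq> tz + S\<close> for the slab \<open>S = C \ (a + C)\<close>, whose part in the ball
  of radius \<open>r\<close> has volume \<open>O(r\<^sup>n\<^sup>-\<^sup>1)\<close>. Since \<open>|x + y| \<ge> c (|x| + |y|)\<close> on \<open>C\<close> and
  \<open>\<Theta> x \<le> K |x|\<^sup>-\<^sup>q\<close>, the integrand is at most \<open>K (t|z| + |y|)\<^sup>-\<^sup>q\<close> at \<open>tz + y\<close>, and the
  layer-cake formula together with the volume bound gives \<open>O(t\<^sup>n\<^sup>-\<^sup>1\<^sup>-\<^sup>q)\<close>.\<close>

section \<open>Pointed cones\<close>

lemma pointed_cone_scaleR:
  "pointed_cone C \<Longrightarrow> x \<in> C \<Longrightarrow> 0 \<le> c \<Longrightarrow> c *\<^sub>R x \<in> C"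
  by (auto simp: pointed_cone_def cone_def)

lemma pointed_cone_closed: "pointed_cone C \<Longrightarrow> closed C"
  by (simp add: pointed_cone_def)

lemma pointed_cone_antisym:
  assumes "pointed_cone C" "x \<in> C" "- x \<in> C"
  shows "x = 0"
proof -
  have "x \<in> C \<inter> uminus ` C"
    using assms(2,3) by (auto intro: image_eqI[of _ _ "- x"])
  then show ?thesis
    using assms(1) by (auto simp: pointed_cone_def)
qed

lemma pointed_cone_nonzero:
  fixes C :: "'a::euclidean_space set"
  assumes "pointed_cone C"
  obtains p where "p \<in> C" "p \<noteq> 0"
proof -
  have "\<not> C \<subseteq> {0}"
    using assms interior_mono[of C "{0}"] by (auto simp: pointed_cone_def)
  then show ?thesis
    using that by blast
qed

lemma pointed_cone_zero: "pointed_cone C \<Longrightarrow> 0 \<in> (C :: 'a::euclidean_space set)"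
  by (metis pointed_cone_nonzero pointed_cone_scaleR order_refl scaleR_zero_left)

lemma pointed_cone_add:
  assumes "pointed_cone C" "x \<in> C" "y \<in> C"
  shows "x + y \<in> C"
proof -
  have "(1/2) *\<^sub>R x + (1/2) *\<^sub>R y \<in> C"
    using assms by (auto simp: pointed_cone_def convex_def)
  from pointed_cone_scaleR[OF assms(1) this, of 2] show ?thesis
    by (simp add: scaleR_add_right)
qed

lemma pointed_cone_frontier_nonempty:
  fixes C :: "'a::euclidean_space set"
  assumes "pointed_cone C"
  shows "frontier C \<noteq> {}"
proof -
  obtain p where "p \<in> C" "p \<noteq> 0"
    using pointed_cone_nonzero[OF assms] .
  then have "- p \<notin> C"
    using pointed_cone_antisym[OF assms] by blast
  then show ?thesis
    using frontier_not_empty[of C] \<open>p \<in> C\<close> by blast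
qed

lemma pointed_cone_norm_add_ge:
  fixes C :: "'a::euclidean_space set"
  assumes pc: "pointed_cone C"
  obtains c where "c > 0" "\<And>u v. u \<in> C \<Longrightarrow> v \<in> C \<Longrightarrow> c * (norm u + norm v) \<le> norm (u + v)"
proof -
  define K where "K = ((cball 0 1 \<inter> C) \<times> (cball 0 1 \<inter> C)) \<inter> {p. norm (fst p) + norm (snd p) = 1}"
  have "compact K"
    unfolding K_def using pointed_cone_closed[OF pc]
    by (intro compact_Int_closed compact_Times closed_Collect_eq continuous_intros compact_cball)
  obtain p where p: "p \<in> C" "p \<noteq> 0"
    using pointed_cone_nonzero[OF pc] .
  have "(p /\<^sub>R norm p, 0) \<in> K"
    using p pointed_cone_zero[OF pc] pointed_cone_scaleR[OF pc p(1), of "1 / norm p"]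
    by (auto simp: K_def divide_inverse_commute)
  then have "K \<noteq> {}" by blast
  moreover have "continuous_on K (\<lambda>p. norm (fst p + snd p))"
    by (intro continuous_intros)
  ultimately obtain w where w: "w \<in> K"
    and wmin: "\<And>y. y \<in> K \<Longrightarrow> norm (fst w + snd w) \<le> norm (fst y + snd y)"
    using continuous_attains_inf[OF \<open>compact K\<close>] by blast
  define c where "c = norm (fst w + snd w)"
  have "c > 0"
  proof (rule ccontr)
    assume "\<not> c > 0"
    then have "fst w = - snd w"
      by (simp add: c_def eq_neg_iff_add_eq_0)
    then show False
      using w pointed_cone_antisym[OF pc, of "snd w"] by (auto simp: K_def)
  qed
  moreover have "c * (norm u + norm v) \<le> norm (u + v)" if "u \<in> C" "v \<in> C" for u v
  proof (cases "norm u + norm v = 0")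
    case False
    define s where "s = norm u + norm v"
    have s: "s > 0"
      using False by (simp add: s_def add_pos_nonneg order_le_neq_trans)
    have "(u /\<^sub>R s, v /\<^sub>R s) \<in> K"
      using that s pointed_cone_scaleR[OF pc, of _ "1/s"]
      by (auto simp: K_def divide_simps s_def[symmetric] add_divide_distrib[symmetric])
         (auto simp: s_def)
    then have "c \<le> norm (u /\<^sub>R s + v /\<^sub>R s)"
      using wmin[of "(u /\<^sub>R s, v /\<^sub>R s)"] by (simp add: c_def)
    also have "\<dots> = norm (u + v) / s"
      using s by (simp add: scaleR_add_right[symmetric] divide_inverse_commute)
    finally have "c \<le> norm (u + v) / s" .
    then show ?thesis
      using s by (simp add: s_def[symmetric] field_simps)
  qed simp
  ultimately show ?thesis
    using that by blast
qed

section \<open>Asymptotic sets contain a translated cone\<close>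

lemma convex_unbounded_far_ball:
  fixes A :: "'a::real_normed_vector set"
  assumes "convex A" "\<not> bounded A" "ball a0 \<rho> \<subseteq> A"
  obtains a where "R < norm a" "ball a (\<rho> / 2) \<subseteq> A"
proof -
  obtain b where b: "b \<in> A" "2 * R + norm a0 < norm b"
    using assms(2) unfolding bounded_iff by (meson not_le)
  define a where "a = (1/2) *\<^sub>R (a0 + b)"
  have "norm b \<le> norm (2 *\<^sub>R a) + norm a0"
    using norm_triangle_ineq4[of "2 *\<^sub>R a" a0] by (simp add: a_def)
  then have "R < norm a"
    using b(2) by simp
  moreover have "ball a (\<rho> / 2) \<subseteq> A"
  proof
    fix w assume "w \<in> ball a (\<rho> / 2)"
    define x where "x = 2 *\<^sub>R w - b"
    have "x - a0 = 2 *\<^sub>R (w - a)"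
      by (simp add: x_def a_def algebra_simps)
    then have "dist a0 x = 2 * dist a w"
      by (metis dist_norm norm_minus_commute norm_scaleR abs_numeral)
    then have "x \<in> ball a0 \<rho>"
      using \<open>w \<in> ball a (\<rho> / 2)\<close> by simp
    then have "(1/2) *\<^sub>R x + (1/2) *\<^sub>R b \<in> A"
      using assms b(1) by (auto simp: convex_def)
    then show "w \<in> A"
      by (simp add: x_def algebra_simps)
  qed
  ultimately show ?thesis
    using that by blast
qed

lemma infdist_frontier_ge_of_ball_subset:
  assumes "ball p r \<subseteq> S" "frontier S \<noteq> {}"
  shows "r \<le> infdist p (frontier S)"
proof -
  have "r \<le> dist p a" if "a \<in> frontier S" for a
  proof (rule ccontr)
    assume "\<not> r \<le> dist p a"
    then have "a \<in> interior S"
      using assms(1) interior_maximal[OF assms(1)] by auto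
    then show False
      using that by (simp add: frontier_def)
  qed
  then show ?thesis
    unfolding infdist_notempty[OF assms(2)] by (intro cINF_greatest assms(2))
qed

lemma pointed_cone_ball_translate_subset:
  assumes pc: "pointed_cone C" and "ball a r \<subseteq> C" "c \<in> C"
  shows "ball (a + c) r \<subseteq> C"
proof
  fix y assume "y \<in> ball (a + c) r"
  then have "y - c \<in> ball a r"
    by (simp add: dist_norm algebra_simps)
  then have "y - c \<in> C"
    using assms(2) by auto
  from pointed_cone_add[OF pc this \<open>c \<in> C\<close>] show "y \<in> C"
    by simp
qed

lemma C_asymptotic_translate_cone_subset:
  fixes C A :: "'a::euclidean_space set"
  assumes pc: "pointed_cone C" and asy: "C_asymptotic C A"
  obtains a where "(+) a ` C \<subseteq> A"
proof -
  obtain c0 where c0: "c0 > 0" "\<And>u v. u \<in> C \<Longrightarrow> v \<in> C \<Longrightarrow> c0 * (norm u + norm v) \<le> norm (u + v)"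
    using pointed_cone_norm_add_ge[OF pc] by blast
  have AC: "A \<subseteq> C"
    using asy by (simp add: C_asymptotic_def)
  obtain a0 where "a0 \<in> interior A"
    using asy by (auto simp: C_asymptotic_def)
  then obtain \<rho> where "\<rho> > 0" "ball a0 \<rho> \<subseteq> A"
    by (meson mem_interior)
  define \<epsilon> where "\<epsilon> = \<rho> / 2"
  have "\<epsilon> > 0"
    using \<open>\<rho> > 0\<close> by (simp add: \<epsilon>_def)
  then obtain R where R: "\<And>x. x \<in> frontier A \<Longrightarrow> R < norm x \<Longrightarrow> infdist x (frontier C) < \<epsilon>"
    using asy unfolding C_asymptotic_def by blast
  obtain a where a: "R / c0 < norm a" "ball a \<epsilon> \<subseteq> A"
    using convex_unbounded_far_ball[of A a0 \<rho> "R / c0"] asy \<open>ball a0 \<rho> \<subseteq> A\<close>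
    by (auto simp: C_asymptotic_def \<epsilon>_def)
  have aA: "a \<in> A"
    using a(2) \<open>\<epsilon> > 0\<close> by auto
  have "a + c \<in> A" if c: "c \<in> C" for c
  proof (rule ccontr)
    assume "a + c \<notin> A"
    then obtain p where p: "p \<in> closed_segment a (a + c)" "p \<in> frontier A"
      using connected_Int_frontier[of "closed_segment a (a + c)" A] aA by blast
    then obtain u where u: "0 \<le> u" "p = a + u *\<^sub>R c"
      by (auto simp: closed_segment_def algebra_simps)
    have uc: "u *\<^sub>R c \<in> C"
      using pointed_cone_scaleR[OF pc c u(1)] .
    have "ball p \<epsilon> \<subseteq> C"
      using pointed_cone_ball_translate_subset[OF pc _ uc] a(2) AC u(2) by blast
    then have "\<epsilon> \<le> infdist p (frontier C)"
      by (rule infdist_frontier_ge_of_ball_subset[OF _ pointed_cone_frontier_nonempty[OF pc]])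
    have "R < c0 * norm a"
      using a(1) c0(1) by (simp add: field_simps)
    also have "\<dots> \<le> c0 * (norm a + norm (u *\<^sub>R c))"
      using c0(1) by simp
    also have "\<dots> \<le> norm p"
      using c0(2)[OF _ uc] aA AC u(2) by auto
    finally show False
      using R[OF p(2)] \<open>\<epsilon> \<le> infdist p (frontier C)\<close> by linarith
  qed
  then show ?thesis
    using that by blast
qed

section \<open>Volume of the slab between a cone and its translate\<close>

lemma power_diff_le_mult:
  fixes x y :: real
  assumes "0 \<le> y" "y \<le> x"
  shows "x ^ Suc m - y ^ Suc m \<le> real (Suc m) * x ^ m * (x - y)"
proof (induction m)
  case (Suc m)
  have "x ^ Suc (Suc m) - y ^ Suc (Suc m) = x * (x ^ Suc m - y ^ Suc m) + y ^ Suc m * (x - y)"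
    by (simp add: algebra_simps)
  also have "\<dots> \<le> x * (real (Suc m) * x ^ m * (x - y)) + x ^ Suc m * (x - y)"
    using Suc assms by (intro add_mono mult_left_mono mult_right_mono power_mono) auto
  finally show ?case
    by (simp add: algebra_simps)
qed simp

lemma measure_cone_Int_cball:
  fixes C :: "'a::euclidean_space set"
  assumes pc: "pointed_cone C" and r: "r > 0"
  shows "measure lebesgue (C \<inter> cball 0 r) = r ^ DIM('a) * measure lebesgue (C \<inter> cball 0 1)"
proof -
  have "C \<inter> cball 0 r = (\<lambda>x. r *\<^sub>R x + 0) ` (C \<inter> cball 0 1)"
  proof
    show "C \<inter> cball 0 r \<subseteq> (\<lambda>x. r *\<^sub>R x + 0) ` (C \<inter> cball 0 1)"
    proof
      fix y assume y: "y \<in> C \<inter> cball 0 r"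
      have "(1/r) *\<^sub>R y \<in> C \<inter> cball 0 1"
        using y r pointed_cone_scaleR[OF pc, of y "1/r"] by (auto simp: field_simps)
      moreover have "y = r *\<^sub>R ((1/r) *\<^sub>R y) + 0"
        using r by simp
      ultimately show "y \<in> (\<lambda>x. r *\<^sub>R x + 0) ` (C \<inter> cball 0 1)"
        by blast
    qed
    show "(\<lambda>x. r *\<^sub>R x + 0) ` (C \<inter> cball 0 1) \<subseteq> C \<inter> cball 0 r"
      using r pointed_cone_scaleR[OF pc] by (auto simp: mult_le_cancel_left1)
  qed
  then show ?thesis
    using measure_lebesgue_affine[of r 0 "C \<inter> cball 0 1"] r by simp
qed

lemma lmeasurable_cone_Int_cball: "pointed_cone C \<Longrightarrow> C \<inter> cball 0 r \<in> lmeasurable"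
  by (intro lmeasurable_compact closed_Int_compact pointed_cone_closed compact_cball)

lemma sets_borel_cone_diff_translate:
  "pointed_cone C \<Longrightarrow> C - (+) a ` C \<in> sets borel"
  using pointed_cone_closed closed_translation[of C a] by (intro sets.Diff borel_closed) auto

lemma measure_cone_Int_cball_diff_le:
  fixes C :: "'a::euclidean_space set"
  assumes pc: "pointed_cone C" and "0 < \<rho>" "\<rho> \<le> r"
  shows "measure lebesgue (C \<inter> cball 0 r) - measure lebesgue (C \<inter> cball 0 \<rho>)
    \<le> real DIM('a) * r ^ (DIM('a) - 1) * (r - \<rho>) * measure lebesgue (C \<inter> cball 0 1)"
proof -
  obtain m where m: "DIM('a) = Suc m"
    using DIM_positive by (metis Suc_pred)
  have "measure lebesgue (C \<inter> cball 0 r) - measure lebesgue (C \<inter> cball 0 \<rho>)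
      = (r ^ Suc m - \<rho> ^ Suc m) * measure lebesgue (C \<inter> cball 0 1)"
    using measure_cone_Int_cball[OF pc assms(2)] measure_cone_Int_cball[OF pc, of r] assms(2,3) m
    by (simp add: algebra_simps)
  also have "\<dots> \<le> real (Suc m) * r ^ m * (r - \<rho>) * measure lebesgue (C \<inter> cball 0 1)"
    using power_diff_le_mult[of \<rho> r m] assms(2,3) by (intro mult_right_mono) auto
  finally show ?thesis
    using m by simp
qed

lemma translate_cone_Int_cball_subset:
  assumes pc: "pointed_cone C" and "a \<in> C"
  shows "(+) a ` (C \<inter> cball 0 (r - norm a)) \<subseteq> C \<inter> cball 0 r"
proof
  fix y assume "y \<in> (+) a ` (C \<inter> cball 0 (r - norm a))"
  then obtain x where x: "x \<in> C" "norm x \<le> r - norm a" "y = a + x"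
    by auto
  have "norm y \<le> norm a + norm x"
    using x(3) norm_triangle_ineq by blast
  then show "y \<in> C \<inter> cball 0 r"
    using x pointed_cone_add[OF pc \<open>a \<in> C\<close> x(1)] by simp
qed

lemma measure_cone_diff_translate_Int_cball_le:
  fixes C :: "'a::euclidean_space set"
  assumes pc: "pointed_cone C" and a: "a \<in> C" and r: "r > 0"
  shows "measure lebesgue ((C - (+) a ` C) \<inter> cball 0 r)
    \<le> real DIM('a) * norm a * measure lebesgue (C \<inter> cball 0 1) * r ^ (DIM('a) - 1)"
proof -
  obtain m where m: "DIM('a) = Suc m"
    using DIM_positive by (metis Suc_pred)
  define V1 where "V1 = measure lebesgue (C \<inter> cball 0 1)"
  have V1: "V1 \<ge> 0"
    by (simp add: V1_def)
  define X where "X = (C - (+) a ` C) \<inter> cball 0 r"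
  have Xl: "X \<in> sets lebesgue"
    unfolding X_def using sets_borel_cone_diff_translate[OF pc, of a]
    by (simp add: sets_completionI_sets)
  have Cr: "C \<inter> cball 0 r \<in> lmeasurable"
    using lmeasurable_cone_Int_cball[OF pc] .
  have XC: "X \<subseteq> C \<inter> cball 0 r"
    by (auto simp: X_def)
  show ?thesis
  proof (cases "r \<le> norm a")
    case True
    have "measure lebesgue X \<le> measure lebesgue (C \<inter> cball 0 r)"
      by (rule measure_mono_fmeasurable[OF XC Xl Cr])
    also have "\<dots> = r * r ^ m * V1"
      using measure_cone_Int_cball[OF pc r] m by (simp add: V1_def)
    also have "\<dots> \<le> real DIM('a) * norm a * r ^ m * V1"
    proof -
      have "norm a \<le> real DIM('a) * norm a"
        using m by (simp add: mult_le_cancel_right1)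
      then show ?thesis
        using True r V1 by (intro mult_right_mono) auto
    qed
    finally show ?thesis
      using m by (simp add: X_def V1_def ac_simps)
  next
    case False
    define Y where "Y = (+) a ` (C \<inter> cball 0 (r - norm a))"
    have Yf: "Y \<in> lmeasurable"
      unfolding Y_def by (rule measurable_translation[OF lmeasurable_cone_Int_cball[OF pc]])
    have "X \<subseteq> (C \<inter> cball 0 r) - Y"
      using XC by (auto simp: X_def Y_def)
    then have "measure lebesgue X \<le> measure lebesgue ((C \<inter> cball 0 r) - Y)"
      using Cr Yf Xl by (intro measure_mono_fmeasurable) (auto intro: fmeasurable_Diff)
    also have "\<dots> = measure lebesgue (C \<inter> cball 0 r) - measure lebesgue (C \<inter> cball 0 (r - norm a))"
      using Cr Yf translate_cone_Int_cball_subset[OF pc a, of r]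
        measure_translation[of a "C \<inter> cball 0 (r - norm a)"]
      by (subst measure_Diff) (auto simp: fmeasurable_def Y_def)
    also have "\<dots> \<le> real DIM('a) * r ^ m * norm a * V1"
      using measure_cone_Int_cball_diff_le[OF pc, of "r - norm a" r] False m by (simp add: V1_def)
    finally show ?thesis
      using m by (simp add: X_def V1_def ac_simps)
  qed
qed

lemma emeasure_cone_diff_translate_Int_cball_le:
  fixes C :: "'a::euclidean_space set"
  assumes pc: "pointed_cone C" and a: "a \<in> C" and r: "r > 0"
  shows "emeasure lborel ((C - (+) a ` C) \<inter> cball 0 r)
    \<le> ennreal (real DIM('a) * norm a * measure lebesgue (C \<inter> cball 0 1) * r ^ (DIM('a) - 1))"
proof -
  let ?X = "(C - (+) a ` C) \<inter> cball 0 r"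
  have Xb: "?X \<in> sets borel"
    using sets_borel_cone_diff_translate[OF pc, of a] by simp
  then have "?X \<in> sets lebesgue"
    by (simp add: sets_completionI_sets)
  moreover have "?X \<subseteq> C \<inter> cball 0 r"
    by auto
  ultimately have "?X \<in> lmeasurable"
    using fmeasurableI2[OF lmeasurable_cone_Int_cball[OF pc, of r]] by blast
  then have "emeasure lebesgue ?X = ennreal (measure lebesgue ?X)"
    by (rule emeasure_eq_measure2)
  then have "emeasure lborel ?X = ennreal (measure lebesgue ?X)"
    using Xb by simp
  then show ?thesis
    using measure_cone_diff_translate_Int_cball_le[OF pc a r] by (simp add: ennreal_leI)
qed

section \<open>Integrals of radially decaying functions\<close>

lemma nn_integral_layer_cake:
  fixes g :: "'a::euclidean_space \<Rightarrow> real"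
  assumes g[measurable]: "g \<in> borel_measurable borel" and nonneg: "\<And>y. 0 \<le> g y"
  shows "(\<integral>\<^sup>+y. ennreal (g y) \<partial>lborel)
     = (\<integral>\<^sup>+s. emeasure lborel {y. s < g y} * indicator {0<..} s \<partial>(lborel::real measure))"
proof -
  have "ennreal (g y) = (\<integral>\<^sup>+s. indicator {0<..<g y} s \<partial>(lborel::real measure))" for y
    using nonneg[of y] by simp
  then have "(\<integral>\<^sup>+y. ennreal (g y) \<partial>lborel)
      = (\<integral>\<^sup>+y. (\<integral>\<^sup>+s. indicator {p. 0 < snd p \<and> snd p < g (fst p)} (y, s) \<partial>(lborel::real measure)) \<partial>lborel)"
    by (intro nn_integral_cong) (simp add: indicator_def)
  also have "\<dots> = (\<integral>\<^sup>+s. (\<integral>\<^sup>+y. indicator {p. 0 < snd p \<and> snd p < g (fst p)} (y, s) \<partial>lborel) \<partial>(lborel::real measure))"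
    by (rule lborel_pair.Fubini'[symmetric]) measurable
  also have "\<dots> = (\<integral>\<^sup>+s. emeasure lborel {y. s < g y} * indicator {0<..} s \<partial>(lborel::real measure))"
  proof (intro nn_integral_cong)
    fix s :: real
    have "(\<integral>\<^sup>+y. indicator {p. 0 < snd p \<and> snd p < g (fst p)} (y, s) \<partial>lborel)
        = (\<integral>\<^sup>+y. indicator {y. s < g y} y * indicator {0<..} s \<partial>lborel)"
      by (intro nn_integral_cong) (auto simp: indicator_def)
    also have "\<dots> = emeasure lborel {y. s < g y} * indicator {0<..} s"
      by (simp add: nn_integral_multc)
    finally show "(\<integral>\<^sup>+y. indicator {p. 0 < snd p \<and> snd p < g (fst p)} (y, s) \<partial>lborel)
        = emeasure lborel {y. s < g y} * indicator {0<..} s" .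
  qed
  finally show ?thesis .
qed

lemma nn_integral_lborel_translate:
  fixes f :: "'a::euclidean_space \<Rightarrow> ennreal"
  assumes [measurable]: "f \<in> borel_measurable borel"
  shows "(\<integral>\<^sup>+x. f (x - t) \<partial>lborel) = (\<integral>\<^sup>+x. f x \<partial>lborel)"
proof -
  have "(\<integral>\<^sup>+x. f x \<partial>lborel) = (\<integral>\<^sup>+x. f x \<partial>distr lborel borel ((+) (- t)))"
    by (simp add: lborel_distr_plus)
  also have "\<dots> = (\<integral>\<^sup>+x. f (x - t) \<partial>lborel)"
    by (simp add: nn_integral_distr)
  finally show ?thesis ..
qed

lemma borel_measurable_indicator_powr_decay:
  fixes S :: "'a::euclidean_space set"
  assumes "S \<in> sets borel" "T > 0"
  shows "(\<lambda>y. indicator S y * (T + norm y) powr (-q)) \<in> borel_measurable borel"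
proof -
  have "\<forall>y\<in>UNIV. T + norm y \<noteq> 0"
    using assms(2) by (metis add_pos_nonneg norm_ge_zero less_irrefl)
  then show ?thesis
    using assms(1) by (intro borel_measurable_times borel_measurable_indicator
        borel_measurable_continuous_onI continuous_intros) auto
qed

lemma emeasure_decay_level_set_le:
  fixes S :: "'a::euclidean_space set"
  assumes S: "S \<in> sets borel"
    and vol: "\<And>r. r > 0 \<Longrightarrow> emeasure lborel (S \<inter> cball 0 r) \<le> ennreal (V * r ^ (DIM('a) - 1))"
    and q: "q > 0" and T: "T > 0" and s: "s > 0"
  shows "emeasure lborel {y. s < indicator S y * (T + norm y) powr (-q)}
    \<le> ennreal (V * s powr (- ((real DIM('a) - 1) / q)))"
proof -
  define r where "r = s powr (-1/q)"
  have r: "r > 0"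
    using s by (simp add: r_def)
  have "{y. s < indicator S y * (T + norm y) powr (-q)} \<subseteq> S \<inter> cball 0 r"
  proof
    fix y assume "y \<in> {y. s < indicator S y * (T + norm y) powr (-q)}"
    then have yS: "y \<in> S" and "s < (T + norm y) powr (-q)"
      using s by (cases "y \<in> S"; simp)+
    then have "((T + norm y) powr (-q)) powr (-1/q) < r"
      using s q unfolding r_def by (intro powr_less_mono2_neg) auto
    then have "T + norm y < r"
      using T q by (simp add: powr_powr add_pos_nonneg)
    then show "y \<in> S \<inter> cball 0 r"
      using yS T by simp
  qed
  moreover have "{y. s < indicator S y * (T + norm y) powr (-q)} \<in> sets lborel"
    using borel_measurable_indicator_powr_decay[OF S T, of q] by measurable
  ultimately have "emeasure lborel {y. s < indicator S y * (T + norm y) powr (-q)}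
      \<le> emeasure lborel (S \<inter> cball 0 r)"
    using S by (intro emeasure_mono) auto
  also have "\<dots> \<le> ennreal (V * r ^ (DIM('a) - 1))"
    using vol[OF r] .
  also have "r ^ (DIM('a) - 1) = s powr (-1/q * real (DIM('a) - 1))"
    using r by (simp add: powr_realpow[symmetric] r_def powr_powr)
  also have "-1/q * real (DIM('a) - 1) = - ((real DIM('a) - 1) / q)"
    by (simp add: of_nat_diff DIM_positive Suc_leI)
  finally show ?thesis .
qed

lemma nn_integral_indicator_powr:
  assumes "0 \<le> \<alpha>" "\<alpha> < 1" "b > 0" "V \<ge> 0"
  shows "(\<integral>\<^sup>+s. ennreal (indicator {0..b} s * (V * s powr (-\<alpha>))) \<partial>lborel)
    = ennreal (V * (b powr (1 - \<alpha>) / (1 - \<alpha>)))"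
proof -
  have "((\<lambda>s. V * s powr (-\<alpha>)) has_integral (V * (b powr (-\<alpha> + 1) / (-\<alpha> + 1)))) {0..b}"
    using has_integral_powr_from_0[of "-\<alpha>" b] assms by (intro has_integral_mult_right) auto
  from nn_integral_has_integral_lebesgue[OF _ this] show ?thesis
    using assms(4) by simp
qed

lemma nn_integral_decay_le_of_volume_growth:
  fixes S :: "'a::euclidean_space set"
  assumes S: "S \<in> sets borel" and V: "V \<ge> 0"
    and vol: "\<And>r. r > 0 \<Longrightarrow> emeasure lborel (S \<inter> cball 0 r) \<le> ennreal (V * r ^ (DIM('a) - 1))"
    and q: "q > real DIM('a) - 1" and T: "T > 0"
  shows "(\<integral>\<^sup>+y. ennreal (indicator S y * (T + norm y) powr (-q)) \<partial>lborel)
     \<le> ennreal (V * (q / (q - real DIM('a) + 1)) * T powr (real DIM('a) - q - 1))"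
proof -
  have "DIM('a) \<ge> 1"
    by (simp add: DIM_positive Suc_leI)
  then have q0: "q > 0"
    using q by linarith
  define g where "g y = indicator S y * (T + norm y) powr (-q)" for y
  define \<alpha> where "\<alpha> = (real DIM('a) - 1) / q"
  have "0 \<le> \<alpha>"
    unfolding \<alpha>_def using q0 \<open>DIM('a) \<ge> 1\<close> by (intro divide_nonneg_pos) auto
  moreover have "\<alpha> < 1"
    unfolding \<alpha>_def using q q0 by (simp add: divide_less_eq)
  ultimately have \<alpha>: "0 \<le> \<alpha>" "\<alpha> < 1" .
  define b where "b = T powr (-q)"
  have b: "b > 0"
    using T by (simp add: b_def)
  have g_measurable: "g \<in> borel_measurable borel"
    unfolding g_def by (rule borel_measurable_indicator_powr_decay[OF S T])
  have g_nonneg: "0 \<le> g y" for y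
    by (simp add: g_def)
  have g_le: "g y \<le> b" for y
    using T q0 by (auto simp: g_def b_def indicator_def intro: powr_mono2')
  have level_set_le: "emeasure lborel {y. s < g y} * indicator {0<..} s
      \<le> ennreal (indicator {0..b} s * (V * s powr (-\<alpha>)))" for s :: real
  proof (cases "0 < s")
    case True
    show ?thesis
    proof (cases "s \<le> b")
      case False
      then have "{y. s < g y} = {}"
        using g_le by (force simp: not_le dest: order.strict_trans2)
      then show ?thesis
        by simp
    qed (use emeasure_decay_level_set_le[OF S vol q0 T True] True in \<open>simp add: g_def \<alpha>_def\<close>)
  qed simp
  have "(\<integral>\<^sup>+y. ennreal (g y) \<partial>lborel)
      \<le> (\<integral>\<^sup>+s. ennreal (indicator {0..b} s * (V * s powr (-\<alpha>))) \<partial>lborel)"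
    unfolding nn_integral_layer_cake[OF g_measurable g_nonneg] by (intro nn_integral_mono level_set_le)
  also have "\<dots> = ennreal (V * (b powr (1 - \<alpha>) / (1 - \<alpha>)))"
    using nn_integral_indicator_powr[OF \<alpha> b V] .
  also have "V * (b powr (1 - \<alpha>) / (1 - \<alpha>))
      = V * (q / (q - real DIM('a) + 1)) * T powr (real DIM('a) - q - 1)"
  proof -
    have "-q * (1 - \<alpha>) = real DIM('a) - q - 1"
      using q0 by (simp add: \<alpha>_def field_simps)
    then have "b powr (1 - \<alpha>) = T powr (real DIM('a) - q - 1)"
      by (simp add: b_def powr_powr)
    moreover have "1 - \<alpha> = (q - real DIM('a) + 1) / q"
      using q0 by (simp add: \<alpha>_def field_simps)
    ultimately show ?thesis
      by (simp add: divide_divide_eq_right ac_simps)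
  qed
  finally show ?thesis
    by (simp add: g_def)
qed

section \<open>Decay of \<open>T\<^sub>\<Theta>\<close>\<close>

lemma homogeneous_le_norm_powr:
  fixes C :: "'a::euclidean_space set" and \<Theta> :: "'a \<Rightarrow> real"
  assumes pc: "pointed_cone C"
    and cont: "continuous_on (C - {0}) \<Theta>"
    and hom: "\<And>x t. x \<in> C - {0} \<Longrightarrow> t > 0 \<Longrightarrow> \<Theta> (t *\<^sub>R x) = t powr (-q) * \<Theta> x"
  obtains K where "K \<ge> 0" "\<And>x. x \<in> C - {0} \<Longrightarrow> \<Theta> x \<le> K * norm x powr (-q)"
proof -
  define S where "S = C \<inter> sphere 0 1"
  have "compact S"
    unfolding S_def by (intro closed_Int_compact pointed_cone_closed[OF pc] compact_sphere)
  obtain p where p: "p \<in> C" "p \<noteq> 0"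
    using pointed_cone_nonzero[OF pc] .
  have "p /\<^sub>R norm p \<in> S"
    using p pointed_cone_scaleR[OF pc p(1), of "1 / norm p"] by (auto simp: S_def divide_inverse_commute)
  then have "S \<noteq> {}"
    by blast
  have SC: "S \<subseteq> C - {0}"
    by (auto simp: S_def)
  obtain w where "w \<in> S" and wmax: "\<And>u. u \<in> S \<Longrightarrow> \<Theta> u \<le> \<Theta> w"
    using continuous_attains_sup[OF \<open>compact S\<close> \<open>S \<noteq> {}\<close> continuous_on_subset[OF cont SC]] by blast
  have "\<Theta> x \<le> max (\<Theta> w) 0 * norm x powr (-q)" if x: "x \<in> C - {0}" for x
  proof -
    define u where "u = (1 / norm x) *\<^sub>R x"
    have nx: "norm x > 0"
      using x by simp
    have uS: "u \<in> S"
      using x pointed_cone_scaleR[OF pc, of x "1 / norm x"] by (auto simp: S_def u_def)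
    have "\<Theta> x = \<Theta> (norm x *\<^sub>R u)"
      using nx by (simp add: u_def)
    also have "\<dots> = norm x powr (-q) * \<Theta> u"
      using hom[of u "norm x"] uS SC nx by blast
    also have "\<dots> \<le> norm x powr (-q) * max (\<Theta> w) 0"
      using wmax[OF uS] by (intro mult_left_mono) auto
    finally show ?thesis
      by (simp add: mult.commute)
  qed
  then show ?thesis
    using that[of "max (\<Theta> w) 0"] by simp
qed

lemma homogeneous_add_le:
  fixes C :: "'a::euclidean_space set" and \<Theta> :: "'a \<Rightarrow> real"
  assumes pc: "pointed_cone C" and q: "q \<ge> 0"
    and cont: "continuous_on (C - {0}) \<Theta>"
    and hom: "\<And>x t. x \<in> C - {0} \<Longrightarrow> t > 0 \<Longrightarrow> \<Theta> (t *\<^sub>R x) = t powr (-q) * \<Theta> x"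
  obtains K where "K \<ge> 0"
    "\<And>x y. x \<in> C - {0} \<Longrightarrow> y \<in> C \<Longrightarrow> \<Theta> (x + y) \<le> K * (norm x + norm y) powr (-q)"
proof -
  obtain K where K: "K \<ge> 0" "\<And>x. x \<in> C - {0} \<Longrightarrow> \<Theta> x \<le> K * norm x powr (-q)"
    using homogeneous_le_norm_powr[OF pc cont hom] by blast
  obtain c where c: "c > 0" "\<And>u v. u \<in> C \<Longrightarrow> v \<in> C \<Longrightarrow> c * (norm u + norm v) \<le> norm (u + v)"
    using pointed_cone_norm_add_ge[OF pc] by blast
  have "\<Theta> (x + y) \<le> K * c powr (-q) * (norm x + norm y) powr (-q)"
    if x: "x \<in> C - {0}" and y: "y \<in> C" for x y
  proof -
    have pos: "0 < c * (norm x + norm y)"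
      using c(1) x by (simp add: add_pos_nonneg)
    moreover have le: "c * (norm x + norm y) \<le> norm (x + y)"
      using c(2) x y by simp
    ultimately have "x + y \<in> C - {0}"
      using pointed_cone_add[OF pc] x y by auto
    then have "\<Theta> (x + y) \<le> K * norm (x + y) powr (-q)"
      by (rule K(2))
    also have "\<dots> \<le> K * (c * (norm x + norm y)) powr (-q)"
      using pos le K(1) q by (intro mult_left_mono powr_mono2') auto
    also have "\<dots> = K * c powr (-q) * (norm x + norm y) powr (-q)"
      using c(1) by (simp add: powr_mult)
    finally show ?thesis .
  qed
  moreover have "K * c powr (-q) \<ge> 0"
    using K(1) by simp
  ultimately show ?thesis
    using that by blast
qed

lemma T_Theta_le_nn_integral_decay:
  fixes C A S :: "'a::euclidean_space set" and \<Theta> :: "'a \<Rightarrow> real"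
  assumes K: "K \<ge> 0" "\<And>x y. x \<in> C - {0} \<Longrightarrow> y \<in> C \<Longrightarrow> \<Theta> (x + y) \<le> K * (norm x + norm y) powr (-q)"
    and S: "S \<in> sets borel" "C - A \<subseteq> S" and x0: "x0 \<in> C - {0}"
  shows "T_Theta C \<Theta> A x0
    \<le> ennreal K * (\<integral>\<^sup>+y. ennreal (indicator S y * (norm x0 + norm y) powr (-q)) \<partial>lborel)"
proof -
  define g where "g y = indicator S y * (norm x0 + norm y) powr (-q)" for y
  have "norm x0 > 0"
    using x0 by simp
  then have g_measurable: "g \<in> borel_measurable borel"
    unfolding g_def by (rule borel_measurable_indicator_powr_decay[OF S(1)])
  have g_nonneg: "0 \<le> g y" for y
    by (simp add: g_def)
  have majorant: "indicator ((+) x0 ` C - (+) x0 ` A) x * ennreal (\<Theta> x) \<le> ennreal (K * g (x - x0))"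
    for x
  proof (cases "x \<in> (+) x0 ` C - (+) x0 ` A")
    case True
    then obtain y where y: "y \<in> C" "y \<notin> A" "x = x0 + y"
      by auto
    then have "\<Theta> x \<le> K * g (x - x0)"
      using K(2)[OF x0 y(1)] S(2) by (auto simp: g_def)
    then show ?thesis
      using True by (simp add: ennreal_leI)
  qed simp
  have "T_Theta C \<Theta> A x0 \<le> (\<integral>\<^sup>+x. ennreal (K * g (x - x0)) \<partial>lebesgue)"
    unfolding T_Theta_def by (intro nn_integral_mono majorant)
  also have "\<dots> = (\<integral>\<^sup>+y. ennreal K * ennreal (g y) \<partial>lborel)"
    using nn_integral_lborel_translate[of "\<lambda>y. ennreal (K * g y)" x0] g_measurable
    by (simp add: nn_integral_completion ennreal_mult[OF K(1) g_nonneg])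
  also have "\<dots> = ennreal K * (\<integral>\<^sup>+y. ennreal (g y) \<partial>lborel)"
    using g_measurable by (simp add: nn_integral_cmult)
  finally show ?thesis
    by (simp add: g_def)
qed

lemma T_Theta_le_norm_powr:
  fixes C A :: "'a::euclidean_space set" and \<Theta> :: "'a \<Rightarrow> real"
  assumes pc: "pointed_cone C" and q: "q > real DIM('a) - 1"
    and cont: "continuous_on (C - {0}) \<Theta>"
    and hom: "\<And>x t. x \<in> C - {0} \<Longrightarrow> t > 0 \<Longrightarrow> \<Theta> (t *\<^sub>R x) = t powr (-q) * \<Theta> x"
    and asy: "C_asymptotic C A"
  obtains M where "M \<ge> 0"
    "\<And>x0. x0 \<in> C - {0} \<Longrightarrow> T_Theta C \<Theta> A x0 \<le> ennreal (M * norm x0 powr (real DIM('a) - q - 1))"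
proof -
  have "DIM('a) \<ge> 1"
    by (simp add: DIM_positive Suc_leI)
  then have q0: "q \<ge> 0"
    using q by linarith
  then obtain K where K: "K \<ge> 0"
    "\<And>x y. x \<in> C - {0} \<Longrightarrow> y \<in> C \<Longrightarrow> \<Theta> (x + y) \<le> K * (norm x + norm y) powr (-q)"
    using homogeneous_add_le[OF pc _ cont hom] by blast
  obtain a where a: "(+) a ` C \<subseteq> A"
    using C_asymptotic_translate_cone_subset[OF pc asy] .
  have "a + 0 \<in> A"
    using a pointed_cone_zero[OF pc] by blast
  then have "a \<in> C"
    using asy by (auto simp: C_asymptotic_def)
  have S: "C - (+) a ` C \<in> sets borel" "C - A \<subseteq> C - (+) a ` C"
    using sets_borel_cone_diff_translate[OF pc] a by auto
  define V where "V = real DIM('a) * norm a * measure lebesgue (C \<inter> cball 0 1)"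
  have "V \<ge> 0"
    by (simp add: V_def)
  have vol: "emeasure lborel ((C - (+) a ` C) \<inter> cball 0 r) \<le> ennreal (V * r ^ (DIM('a) - 1))"
    if "r > 0" for r
    using emeasure_cone_diff_translate_Int_cball_le[OF pc \<open>a \<in> C\<close> that] by (simp add: V_def)
  define M where "M = K * (V * (q / (q - real DIM('a) + 1)))"
  have "T_Theta C \<Theta> A x0 \<le> ennreal (M * norm x0 powr (real DIM('a) - q - 1))"
    if x0: "x0 \<in> C - {0}" for x0
  proof -
    have "T_Theta C \<Theta> A x0
        \<le> ennreal K * (\<integral>\<^sup>+y. ennreal (indicator (C - (+) a ` C) y * (norm x0 + norm y) powr (-q)) \<partial>lborel)"
      using T_Theta_le_nn_integral_decay[OF K S x0] .
    also have "\<dots> \<le> ennreal K * ennreal (V * (q / (q - real DIM('a) + 1)) * norm x0 powr (real DIM('a) - q - 1))"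
      using nn_integral_decay_le_of_volume_growth[OF S(1) \<open>V \<ge> 0\<close> vol q, of "norm x0"] x0
      by (intro mult_left_mono) auto
    also have "\<dots> = ennreal (M * norm x0 powr (real DIM('a) - q - 1))"
      using K(1) by (simp add: M_def ennreal_mult'[symmetric] mult.assoc)
    finally show ?thesis .
  qed
  moreover have "M \<ge> 0"
    unfolding M_def using K(1) \<open>V \<ge> 0\<close> q q0 by (intro mult_nonneg_nonneg divide_nonneg_pos) auto
  ultimately show ?thesis
    using that by blast
qed

lemma enn2real_smallo_powr_of_bound:
  fixes f :: "real \<Rightarrow> ennreal"
  assumes "\<forall>\<^sub>F t in at_top. f t \<le> ennreal (M * t powr (e - 1))"
  shows "(\<lambda>t. enn2real (f t)) \<in> o[at_top](\<lambda>t. t powr e)"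
proof -
  have "(\<lambda>t. enn2real (f t)) \<in> O[at_top](\<lambda>t. t powr (e - 1))"
  proof (rule bigoI)
    show "\<forall>\<^sub>F t in at_top. norm (enn2real (f t)) \<le> \<bar>M\<bar> * norm (t powr (e - 1))"
      using assms
    proof eventually_elim
      case (elim t)
      have "f t \<le> ennreal (\<bar>M\<bar> * t powr (e - 1))"
        using elim by (rule order_trans) (intro ennreal_leI mult_right_mono, auto)
      then show ?case
        by (simp add: enn2real_leI)
    qed
  qed
  also have "(\<lambda>t::real. t powr (e - 1)) \<in> o[at_top](\<lambda>t. t powr e)"
    using powr_smallo_iff[of "\<lambda>x::real. x" at_top "e - 1" e] by (simp add: filterlim_ident)
  finally show ?thesis .
qed

theorem lemma5p5:
  fixes C A :: "'a::euclidean_space set" and \<Theta> :: "'a \<Rightarrow> real" and q :: real and z :: 'a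
  assumes "DIM('a) \<ge> 2"
    and "pointed_cone C"
    and "q > real DIM('a)"
    and "continuous_on (C - {0}) \<Theta>"
    and "\<And>x. x \<in> C - {0} \<Longrightarrow> \<Theta> x > 0"
    and "\<And>x t. x \<in> C - {0} \<Longrightarrow> t > 0 \<Longrightarrow> \<Theta> (t *\<^sub>R x) = t powr (-q) * \<Theta> x"
    and "C_asymptotic C A"
    and "z \<in> C - {0}"
  shows "(\<exists>M>0. \<forall>\<^sub>F t in at_top.
            T_Theta C \<Theta> A (t *\<^sub>R z) \<le> ennreal (M * t powr (real DIM('a) - q - 1)))
      \<and> (\<lambda>t. enn2real (T_Theta C \<Theta> A (t *\<^sub>R z))) \<in> o[at_top](\<lambda>t. t powr (real DIM('a) - q))"
proof -
  have "q > real DIM('a) - 1"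
    using assms(3) by simp
  then obtain M where M: "M \<ge> 0"
    "\<And>x. x \<in> C - {0} \<Longrightarrow> T_Theta C \<Theta> A x \<le> ennreal (M * norm x powr (real DIM('a) - q - 1))"
    using T_Theta_le_norm_powr[OF assms(2) _ assms(4,6,7)] by blast
  define M' where "M' = M * norm z powr (real DIM('a) - q - 1) + 1"
  have bound_pos: "T_Theta C \<Theta> A (t *\<^sub>R z) \<le> ennreal (M' * t powr (real DIM('a) - q - 1))"
    if "t > 0" for t
  proof -
    have "t *\<^sub>R z \<in> C - {0}"
      using assms(8) that by (auto intro: pointed_cone_scaleR[OF assms(2)])
    then have "T_Theta C \<Theta> A (t *\<^sub>R z) \<le> ennreal (M * norm (t *\<^sub>R z) powr (real DIM('a) - q - 1))"
      by (rule M(2))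
    also have "M * norm (t *\<^sub>R z) powr (real DIM('a) - q - 1)
        = M * norm z powr (real DIM('a) - q - 1) * t powr (real DIM('a) - q - 1)"
      using that by (simp add: powr_mult mult_ac)
    also have "\<dots> \<le> ennreal (M' * t powr (real DIM('a) - q - 1))"
      by (intro ennreal_leI mult_right_mono) (auto simp: M'_def)
    finally show ?thesis .
  qed
  have bound: "\<forall>\<^sub>F t in at_top. T_Theta C \<Theta> A (t *\<^sub>R z) \<le> ennreal (M' * t powr (real DIM('a) - q - 1))"
    using eventually_gt_at_top[of "0::real"] by eventually_elim (rule bound_pos)
  moreover have "M' > 0"
    using M(1) by (simp add: M'_def add_nonneg_pos)
  ultimately show ?thesis
    using enn2real_smallo_powr_of_bound[OF bound] by blast
qed

end
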